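(* The winding number is the unique invariant of a bounded open interval of $\widetilde{\mathbb{RP}}^1=\mathbb R$ under the action of $\widetilde{SL}(2,\mathbb R)$: for bounded open intervals $U,U'\subset\mathbb R$, there exists $\tilde A\in\widetilde{SL}(2,\mathbb R)$ with $\tilde A(U)=U'$ if and only if $W(U)=W(U')$.
   Context: Let $\pi:\mathbb R\to\mathbb{RP}^1$, $\pi(t)=[\cos t:\sin t]$, and $\bar\pi(t)=(\cos t,\sin t)\in S^1$. $SL(2,\mathbb R)$ acts on $S^1$ by $A\cdot v=Av/\|Av\|$. The universal cover $\widetilde{SL}(2,\mathbb R)$ is realized as the group of diffeomorphisms $\tilde A$ of $\mathbb R$ for which there exists $A\in SL(2,\mathbb R)$ with $\bar\pi\circ\tilde A=A\cdot\bar\pi$ (lifts of homographies of $\mathbb{RP}^1$). Winding number: for real numbers $a<b$, $W((a,b))=k$ if $b=a+k\pi$ with $k\in\mathbb N$, and $W((a,b))=k+\frac12$ if $a+k\pi<b<a+(k+1)\pi$ with $k\in\mathbb N=\{0,1,2,\dots\}$. *)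

theory Defs
  imports "HOL-Analysis.Analysis"
begin

definition SL2 :: "(real^2^2) set" where
  "SL2 = {A. det A = 1}"

definition pibar :: "real \<Rightarrow> real^2" where
  "pibar t = vector [cos t, sin t]"

definition sl_act :: "real^2^2 \<Rightarrow> real^2 \<Rightarrow> real^2" where
  "sl_act A v = (1 / norm (A *v v)) *\<^sub>R (A *v v)"

definition smooth_real :: "(real \<Rightarrow> real) \<Rightarrow> bool" where
  "smooth_real f \<longleftrightarrow> (\<forall>n x. ((deriv ^^ n) f) differentiable (at x))"

definition diffeo_real :: "(real \<Rightarrow> real) \<Rightarrow> bool" where
  "diffeo_real f \<longleftrightarrow> bij f \<and> smooth_real f \<and> smooth_real (inv f)"

text \<open>The universal cover of SL(2,R), realised as lifts of homographies.\<close>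
definition SL2_tilde :: "(real \<Rightarrow> real) set" where
  "SL2_tilde = {F. diffeo_real F \<and> (\<exists>A\<in>SL2. pibar \<circ> F = sl_act A \<circ> pibar)}"

definition winding :: "real \<Rightarrow> real \<Rightarrow> real" where
  "winding a b = (THE w.
     (\<exists>k::nat. b = a + real k * pi \<and> w = real k) \<or>
     (\<exists>k::nat. a + real k * pi < b \<and> b < a + (real k + 1) * pi \<and> w = real k + 1/2))"

end

(*
  An element F of the universal cover is a continuous injection of the line with
  F (t + pi) = F t + pi (mod 2 pi), because the antipodal map commutes with every A
  in SL(2,R); injectivity of the action on the circle forces |F (t + pi) - F t| < 2 pi,
  so F (t + pi) = F t + pi if F increases and F t - pi if it decreases. Either F or
  -F therefore preserves, for every k, the position of b relative to a + k pi, and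
  this position is all that the winding number of (a, b) records.

  Conversely, intervals of equal integral winding number differ by a translation,
  the lift of a rotation. Two intervals whose half-lengths t, t' lie in the same
  open quadrant (k pi/2, (k + 1) pi/2) are matched, after centring them at 0, by
  the lift of diag(sqrt mu, 1/sqrt mu) with mu = tan t / tan t'.
*)

theory Submission
  imports Defs
begin

section \<open>Smooth functions of a real variable\<close>

(* Truncating smooth_real at a finite order makes the closure properties below
   provable by induction on the order. *)
definition deriv_differentiable_upto :: "nat \<Rightarrow> (real \<Rightarrow> real) \<Rightarrow> bool" where
  "deriv_differentiable_upto n f \<longleftrightarrow> (\<forall>m\<le>n. \<forall>x. ((deriv ^^ m) f) differentiable (at x))"

lemma smooth_real_iff_upto: "smooth_real f \<longleftrightarrow> (\<forall>n. deriv_differentiable_upto n f)"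
  unfolding smooth_real_def deriv_differentiable_upto_def by blast

lemma deriv_differentiable_upto_0: "deriv_differentiable_upto 0 f \<longleftrightarrow> (\<forall>x. f differentiable (at x))"
  unfolding deriv_differentiable_upto_def by simp

lemma deriv_differentiable_upto_Suc:
  "deriv_differentiable_upto (Suc n) f \<longleftrightarrow>
     (\<forall>x. f differentiable (at x)) \<and> deriv_differentiable_upto n (deriv f)"
proof -
  have "(\<forall>m\<le>Suc n. P m) \<longleftrightarrow> P 0 \<and> (\<forall>m\<le>n. P (Suc m))" for P
    by (metis Suc_le_mono le0 not0_implies_Suc)
  moreover have "(deriv ^^ Suc m) f = (deriv ^^ m) (deriv f)" for m
    by (simp add: funpow_Suc_right del: funpow.simps)
  ultimately show ?thesis
    unfolding deriv_differentiable_upto_def by simp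
qed

lemma deriv_differentiable_upto_has_derivative:
  "deriv_differentiable_upto n f \<Longrightarrow> (f has_real_derivative deriv f x) (at x)"
  unfolding deriv_differentiable_upto_def
  by (metis DERIV_deriv_iff_real_differentiable funpow_0 le0)

lemma deriv_differentiable_upto_SucI:
  assumes "\<And>x. (f has_real_derivative f' x) (at x)" and "deriv_differentiable_upto n f'"
  shows "deriv_differentiable_upto (Suc n) f"
proof -
  have "deriv f = f'"
    using assms(1) by (simp add: DERIV_imp_deriv fun_eq_iff)
  then show ?thesis
    using assms unfolding deriv_differentiable_upto_Suc real_differentiable_def by metis
qed

lemma deriv_differentiable_upto_mono:
  "deriv_differentiable_upto (Suc n) f \<Longrightarrow> deriv_differentiable_upto n f"
  unfolding deriv_differentiable_upto_def by auto

lemma deriv_differentiable_upto_const: "deriv_differentiable_upto n (\<lambda>x. c)"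
  by (induction n arbitrary: c)
     (auto simp: deriv_differentiable_upto_0 intro!: deriv_differentiable_upto_SucI[of _ "\<lambda>_. 0"])

lemma deriv_differentiable_upto_ident: "deriv_differentiable_upto n (\<lambda>x. x)"
  by (cases n) (auto simp: deriv_differentiable_upto_0
      intro!: deriv_differentiable_upto_SucI[of _ "\<lambda>x. 1"] deriv_differentiable_upto_const)

lemma deriv_differentiable_upto_add:
  "deriv_differentiable_upto n f \<Longrightarrow> deriv_differentiable_upto n g \<Longrightarrow>
     deriv_differentiable_upto n (\<lambda>x. f x + g x)"
proof (induction n arbitrary: f g)
  case 0
  then show ?case by (auto simp: deriv_differentiable_upto_0)
next
  case (Suc n)
  have "deriv_differentiable_upto n (\<lambda>x. deriv f x + deriv g x)"
    using Suc by (auto simp: deriv_differentiable_upto_Suc)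
  then show ?case
    using Suc.prems
    by (auto intro!: deriv_differentiable_upto_SucI derivative_eq_intros
        deriv_differentiable_upto_has_derivative)
qed

lemma deriv_differentiable_upto_mult:
  "deriv_differentiable_upto n f \<Longrightarrow> deriv_differentiable_upto n g \<Longrightarrow>
     deriv_differentiable_upto n (\<lambda>x. f x * g x)"
proof (induction n arbitrary: f g)
  case 0
  then show ?case by (auto simp: deriv_differentiable_upto_0)
next
  case (Suc n)
  have "deriv_differentiable_upto n (\<lambda>x. deriv f x * g x + f x * deriv g x)"
    using Suc deriv_differentiable_upto_mono[OF Suc.prems(1)] deriv_differentiable_upto_mono[OF Suc.prems(2)]
    by (intro deriv_differentiable_upto_add Suc.IH) (auto simp: deriv_differentiable_upto_Suc)
  then show ?case
    by (intro deriv_differentiable_upto_SucI[of _ "\<lambda>x. deriv f x * g x + f x * deriv g x"])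
       (use Suc.prems in \<open>auto intro!: derivative_eq_intros deriv_differentiable_upto_has_derivative\<close>)
qed

lemma deriv_differentiable_upto_compose:
  "deriv_differentiable_upto n f \<Longrightarrow> deriv_differentiable_upto n g \<Longrightarrow>
     deriv_differentiable_upto n (\<lambda>x. g (f x))"
proof (induction n arbitrary: f g)
  case 0
  have "(g \<circ> f) differentiable (at x)" for x
    by (rule differentiable_chain_at) (use 0 in \<open>simp_all add: deriv_differentiable_upto_0\<close>)
  then show ?case
    by (simp add: deriv_differentiable_upto_0 o_def)
next
  case (Suc n)
  have "deriv_differentiable_upto n (\<lambda>x. deriv g (f x))"
    using Suc.IH[of f "deriv g"] Suc.prems deriv_differentiable_upto_mono[OF Suc.prems(1)]
    by (simp add: deriv_differentiable_upto_Suc)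
  then have "deriv_differentiable_upto n (\<lambda>x. deriv g (f x) * deriv f x)"
    using Suc.prems by (intro deriv_differentiable_upto_mult) (auto simp: deriv_differentiable_upto_Suc)
  moreover have "((\<lambda>x. g (f x)) has_real_derivative deriv g (f x) * deriv f x) (at x)" for x
    using Suc.prems by (intro DERIV_chain2 deriv_differentiable_upto_has_derivative)
  ultimately show ?case
    by (rule deriv_differentiable_upto_SucI[rotated])
qed

lemma deriv_differentiable_upto_inverse:
  "deriv_differentiable_upto n f \<Longrightarrow> (\<And>x. f x \<noteq> 0) \<Longrightarrow>
     deriv_differentiable_upto n (\<lambda>x. inverse (f x))"
proof (induction n arbitrary: f)
  case 0
  have "((\<lambda>x. inverse (f x)) has_real_derivative - (deriv f x * inverse (f x) ^ 2)) (at x)" for x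
    using 0 by (auto intro!: derivative_eq_intros deriv_differentiable_upto_has_derivative
        simp: power2_eq_square)
  then show ?case
    by (auto simp: deriv_differentiable_upto_0 real_differentiable_def)
next
  case (Suc n)
  have "deriv_differentiable_upto n (\<lambda>x. -1 * (deriv f x * (inverse (f x) * inverse (f x))))"
    using Suc deriv_differentiable_upto_mono[OF Suc.prems(1)]
    by (intro deriv_differentiable_upto_mult deriv_differentiable_upto_const Suc.IH)
       (auto simp: deriv_differentiable_upto_Suc)
  then show ?case
    by (intro deriv_differentiable_upto_SucI[of _ "\<lambda>x. -1 * (deriv f x * (inverse (f x) * inverse (f x)))"])
       (use Suc.prems in \<open>auto intro!: derivative_eq_intros deriv_differentiable_upto_has_derivative
         simp: power2_eq_square\<close>)
qed

lemma deriv_differentiable_upto_sin_cos: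
  "deriv_differentiable_upto n sin \<and> deriv_differentiable_upto n cos"
proof (induction n)
  case 0
  then show ?case
    by (auto simp: deriv_differentiable_upto_0 real_differentiable_def intro!: derivative_eq_intros)
next
  case (Suc n)
  then have "deriv_differentiable_upto n (\<lambda>x. -1 * sin x)"
    by (intro deriv_differentiable_upto_mult deriv_differentiable_upto_const) simp
  then have "deriv_differentiable_upto (Suc n) cos"
    by (intro deriv_differentiable_upto_SucI[of _ "\<lambda>x. -1 * sin x"]) (auto intro!: derivative_eq_intros)
  moreover have "deriv_differentiable_upto (Suc n) sin"
    using Suc by (intro deriv_differentiable_upto_SucI[of _ cos]) (auto intro!: derivative_eq_intros)
  ultimately show ?case by simp
qed

lemma deriv_differentiable_upto_arctan: "deriv_differentiable_upto n arctan"
proof (cases n)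
  case 0
  then show ?thesis
    by (auto simp: deriv_differentiable_upto_0 real_differentiable_def intro!: derivative_eq_intros)
next
  case (Suc m)
  have "1 + x * x \<noteq> 0" for x :: real
    using zero_le_square[of x] by linarith
  then have "deriv_differentiable_upto m (\<lambda>x. inverse (1 + x * x))"
    by (intro deriv_differentiable_upto_inverse deriv_differentiable_upto_add deriv_differentiable_upto_mult
        deriv_differentiable_upto_const deriv_differentiable_upto_ident)
  then show ?thesis
    unfolding Suc
    by (intro deriv_differentiable_upto_SucI[of _ "\<lambda>x. inverse (1 + x * x)"])
       (auto intro!: derivative_eq_intros simp: power2_eq_square)
qed

section \<open>The action of SL(2,R) on the circle\<close>

lemma pibar_nth [simp]: "pibar t $ 1 = cos t" "pibar t $ 2 = sin t"
  by (simp_all add: pibar_def)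

lemma vec2_eq_iff: "(x::real^2) = y \<longleftrightarrow> x$1 = y$1 \<and> x$2 = y$2"
  by (auto simp: vec_eq_iff forall_2)

lemma norm_vec2: "norm (x::real^2) = sqrt ((x$1)\<^sup>2 + (x$2)\<^sup>2)"
  by (simp add: norm_vec_def L2_set_def sum_2)

lemma matrix_vector_mult_2:
  "((A::real^2^2) *v v)$1 = A$1$1 * v$1 + A$1$2 * v$2"
  "((A::real^2^2) *v v)$2 = A$2$1 * v$1 + A$2$2 * v$2"
  by (simp_all add: matrix_vector_mult_def sum_2)

lemma norm_pibar [simp]: "norm (pibar t) = 1"
  by (simp add: norm_vec2)

lemma pibar_nonzero [simp]: "pibar t \<noteq> 0"
  using norm_pibar[of t] by (metis norm_zero zero_neq_one)

lemma pibar_eq_iff: "pibar x = pibar y \<longleftrightarrow> (\<exists>n::int. x = y + 2 * pi * n)"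
  using sin_cos_eq_iff[of x y] by (auto simp: vec2_eq_iff)

lemma pibar_eq_imp_eq:
  assumes "pibar x = pibar y" and "\<bar>x - y\<bar> < 2 * pi"
  shows "x = y"
proof -
  obtain n :: int where n: "x = y + 2 * pi * n"
    using assms(1) pibar_eq_iff by blast
  then have "\<bar>real_of_int n\<bar> < 1"
    using assms(2) by (simp add: abs_mult)
  then show ?thesis
    using n by simp
qed

lemma pibar_add_pi: "pibar (t + pi) = - pibar t"
  by (simp add: vec2_eq_iff)

lemma pibar_add_arctan:
  "sqrt (1 + u\<^sup>2) *\<^sub>R pibar (t + arctan u) = vector [cos t - u * sin t, sin t + u * cos t]"
proof -
  have "sqrt (1 + u\<^sup>2) > 0"
    by (simp add: add_pos_nonneg)
  then show ?thesis
    by (simp add: vec2_eq_iff cos_add sin_add cos_arctan sin_arctan algebra_simps)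
qed

lemma SL2_mult_vec_eq_0_iff:
  assumes "A \<in> SL2"
  shows "A *v v = 0 \<longleftrightarrow> v = 0"
proof -
  have "inj ((*v) A)"
    using assms by (intro inj_matrix_vector_mult) (simp add: SL2_def invertible_det_nz)
  then show ?thesis
    by (metis injD matrix_vector_mult_0_right)
qed

lemma sl_act_uminus: "sl_act A (- v) = - sl_act A v"
proof -
  have "A *v (- v) = - (A *v v)"
    by (simp add: vec2_eq_iff matrix_vector_mult_2)
  then show ?thesis
    by (simp add: sl_act_def)
qed

lemma sl_act_pos_scale:
  assumes "A *v v = r *\<^sub>R w" and "r > 0" and "norm w = 1"
  shows "sl_act A v = w"
  using assms by (simp add: sl_act_def)

lemma sl_act_mult:
  assumes "B \<in> SL2" and "v \<noteq> 0"
  shows "sl_act (A ** B) v = sl_act A (sl_act B v)"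
proof -
  have "norm (B *v v) > 0"
    using assms SL2_mult_vec_eq_0_iff by auto
  then show ?thesis
    by (simp add: sl_act_def matrix_vector_mult_scaleR matrix_vector_mul_assoc)
qed

lemma sl_act_inj:
  assumes "A \<in> SL2" and "norm u = 1" and "norm v = 1" and "sl_act A u = sl_act A v"
  shows "u = v"
proof -
  define c where "c = norm (A *v u) / norm (A *v v)"
  have "A *v u \<noteq> 0" "A *v v \<noteq> 0"
    using assms SL2_mult_vec_eq_0_iff by auto
  then have "A *v u = norm (A *v u) *\<^sub>R sl_act A u"
    by (simp add: sl_act_def)
  also have "\<dots> = norm (A *v u) *\<^sub>R sl_act A v"
    using assms(4) by simp
  also have "\<dots> = c *\<^sub>R (A *v v)"
    by (simp add: sl_act_def c_def divide_inverse)
  finally have "A *v u = c *\<^sub>R (A *v v)" .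
  then have "A *v (u - c *\<^sub>R v) = 0"
    by (simp add: matrix_vector_mult_diff_distrib matrix_vector_mult_scaleR)
  then have "u = c *\<^sub>R v"
    using assms(1) SL2_mult_vec_eq_0_iff by auto
  moreover have "c \<ge> 0"
    by (simp add: c_def)
  ultimately show ?thesis
    using assms(2,3) by simp
qed

section \<open>The group of lifts\<close>

lemma diffeo_realI:
  assumes "f \<circ> g = id" and "g \<circ> f = id" and "smooth_real f" and "smooth_real g"
  shows "diffeo_real f"
  using assms o_bij[OF assms(2,1)] inv_unique_comp[OF assms(1,2)]
  by (simp add: diffeo_real_def)

lemma smooth_real_compose: "smooth_real f \<Longrightarrow> smooth_real g \<Longrightarrow> smooth_real (g \<circ> f)"
  by (simp add: smooth_real_iff_upto o_def deriv_differentiable_upto_compose)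

lemma SL2_tilde_continuous: "F \<in> SL2_tilde \<Longrightarrow> continuous_on S F"
  unfolding SL2_tilde_def diffeo_real_def smooth_real_iff_upto
  by (metis (no_types, lifting) mem_Collect_eq continuous_at_imp_continuous_on
      DERIV_isCont deriv_differentiable_upto_has_derivative)

lemma SL2_tilde_inj: "F \<in> SL2_tilde \<Longrightarrow> inj F"
  by (simp add: SL2_tilde_def diffeo_real_def bij_is_inj)

lemma SL2_tilde_comp:
  assumes "F \<in> SL2_tilde" and "G \<in> SL2_tilde"
  shows "F \<circ> G \<in> SL2_tilde"
proof -
  obtain A where A: "A \<in> SL2" "pibar \<circ> F = sl_act A \<circ> pibar" and F: "diffeo_real F"
    using assms(1) by (auto simp: SL2_tilde_def)
  obtain B where B: "B \<in> SL2" "pibar \<circ> G = sl_act B \<circ> pibar" and G: "diffeo_real G"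
    using assms(2) by (auto simp: SL2_tilde_def)
  have "F \<circ> G \<circ> (inv G \<circ> inv F) = id" "inv G \<circ> inv F \<circ> (F \<circ> G) = id"
    using F G by (auto simp: diffeo_real_def fun_eq_iff bij_is_surj bij_is_inj surj_f_inv_f)
  then have "diffeo_real (F \<circ> G)"
    using F G by (intro diffeo_realI[where g = "inv G \<circ> inv F"] smooth_real_compose)
      (auto simp: diffeo_real_def)
  moreover have "A ** B \<in> SL2"
    using A B by (simp add: SL2_def det_mul)
  moreover have "pibar \<circ> (F \<circ> G) = sl_act (A ** B) \<circ> pibar"
    using A B by (simp add: fun_eq_iff sl_act_mult)
  ultimately show ?thesis
    unfolding SL2_tilde_def by blast
qed

definition rotation_matrix :: "real \<Rightarrow> real^2^2" where
  "rotation_matrix c = vector [vector [cos c, - sin c], vector [sin c, cos c]]"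

lemma translation_in_SL2_tilde: "(\<lambda>t. t + c) \<in> SL2_tilde"
proof -
  have "smooth_real (\<lambda>t. t + d)" for d
    by (simp add: smooth_real_iff_upto deriv_differentiable_upto_add
        deriv_differentiable_upto_ident deriv_differentiable_upto_const)
  from this[of c] this[of "- c"] have "diffeo_real (\<lambda>t. t + c)"
    by (intro diffeo_realI[where g = "\<lambda>t. t + (- c)"]) (auto simp: fun_eq_iff)
  moreover have "rotation_matrix c \<in> SL2"
    by (simp add: SL2_def det_2 rotation_matrix_def power2_eq_square[symmetric])
  moreover have "sl_act (rotation_matrix c) (pibar t) = pibar (t + c)" for t
  proof -
    have "rotation_matrix c *v pibar t = pibar (t + c)"
      by (simp add: vec2_eq_iff matrix_vector_mult_2 rotation_matrix_def cos_add sin_add algebra_simps)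
    then show ?thesis
      by (simp add: sl_act_def)
  qed
  ultimately show ?thesis
    unfolding SL2_tilde_def by (auto simp: fun_eq_iff intro!: bexI[of _ "rotation_matrix c"])
qed

definition hyperbolic_matrix :: "real \<Rightarrow> real^2^2" where
  "hyperbolic_matrix \<mu> = vector [vector [sqrt \<mu>, 0], vector [0, 1 / sqrt \<mu>]]"

(* The arctan term is the angle from (cos t, sin t) to (mu cos t, sin t), which stays
   in (-pi/2, pi/2); hence tan (hyperbolic_lift mu t) = tan t / mu. *)
definition hyperbolic_lift :: "real \<Rightarrow> real \<Rightarrow> real" where
  "hyperbolic_lift \<mu> t = t + arctan ((1 - \<mu>) * sin t * cos t / (\<mu> * (cos t)\<^sup>2 + (sin t)\<^sup>2))"

lemma hyperbolic_matrix_in_SL2: "\<mu> > 0 \<Longrightarrow> hyperbolic_matrix \<mu> \<in> SL2"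
  by (simp add: SL2_def det_2 hyperbolic_matrix_def)

lemma hyperbolic_lift_denominator_pos:
  fixes \<mu> t :: real
  assumes "\<mu> > 0"
  shows "\<mu> * (cos t)\<^sup>2 + (sin t)\<^sup>2 > 0"
proof (cases "cos t = 0")
  case True
  then show ?thesis
    using sin_cos_squared_add[of t] by simp
next
  case False
  then show ?thesis
    using assms by (simp add: add_pos_nonneg)
qed

lemma hyperbolic_lift_close: "\<bar>hyperbolic_lift \<mu> t - t\<bar> < pi / 2"
proof -
  have "\<bar>arctan y\<bar> < pi / 2" for y
    using arctan_bounded[of y] unfolding abs_less_iff by linarith
  then show ?thesis
    by (simp add: hyperbolic_lift_def)
qed

lemma hyperbolic_lift_minus: "hyperbolic_lift \<mu> (- t) = - hyperbolic_lift \<mu> t"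
  by (simp add: hyperbolic_lift_def arctan_minus)

lemma pibar_hyperbolic_lift:
  assumes "\<mu> > 0"
  shows "pibar (hyperbolic_lift \<mu> t) = sl_act (hyperbolic_matrix \<mu>) (pibar t)"
proof -
  define c s where "c = cos t" and "s = sin t"
  define D where "D = \<mu> * c\<^sup>2 + s\<^sup>2"
  define u where "u = (1 - \<mu>) * s * c / D"
  have "D > 0"
    using hyperbolic_lift_denominator_pos[OF assms] by (simp add: D_def c_def s_def)
  have "c\<^sup>2 + s\<^sup>2 = 1"
    by (simp add: c_def s_def)
  then have "c - u * s = \<mu> * c / D" "s + u * c = s / D"
    using \<open>D > 0\<close> by (simp_all add: u_def D_def field_simps power2_eq_square) algebra+
  moreover have "sqrt \<mu> * sqrt \<mu> = \<mu>"
    using assms by simp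
  ultimately have "hyperbolic_matrix \<mu> *v pibar t = (D / sqrt \<mu>) *\<^sub>R vector [c - u * s, s + u * c]"
    using \<open>D > 0\<close> assms
    by (simp add: vec2_eq_iff matrix_vector_mult_2 hyperbolic_matrix_def c_def s_def field_simps)
  also have "\<dots> = (D / sqrt \<mu>) *\<^sub>R (sqrt (1 + u\<^sup>2) *\<^sub>R pibar (t + arctan u))"
    by (simp only: pibar_add_arctan c_def s_def)
  also have "\<dots> = (D / sqrt \<mu> * sqrt (1 + u\<^sup>2)) *\<^sub>R pibar (hyperbolic_lift \<mu> t)"
    by (simp add: hyperbolic_lift_def u_def D_def c_def s_def)
  finally have "sl_act (hyperbolic_matrix \<mu>) (pibar t) = pibar (hyperbolic_lift \<mu> t)"
    by (rule sl_act_pos_scale) (use \<open>D > 0\<close> assms in \<open>simp_all add: add_pos_nonneg\<close>)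
  then show ?thesis ..
qed

lemma hyperbolic_lift_inverse:
  assumes "\<mu> > 0"
  shows "hyperbolic_lift (1 / \<mu>) (hyperbolic_lift \<mu> t) = t"
proof (rule pibar_eq_imp_eq)
  let ?M = "hyperbolic_matrix" 
  have "(?M (1 / \<mu>) ** ?M \<mu>) *v v = v" for v
    using assms by (simp add: matrix_vector_mul_assoc[symmetric] vec2_eq_iff matrix_vector_mult_2
        hyperbolic_matrix_def real_sqrt_divide)
  then show "pibar (hyperbolic_lift (1 / \<mu>) (hyperbolic_lift \<mu> t)) = pibar t"
    using assms by (simp add: pibar_hyperbolic_lift hyperbolic_matrix_in_SL2 sl_act_mult[symmetric])
       (simp add: sl_act_def)
  show "\<bar>hyperbolic_lift (1 / \<mu>) (hyperbolic_lift \<mu> t) - t\<bar> < 2 * pi"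
    using hyperbolic_lift_close[of "1 / \<mu>" "hyperbolic_lift \<mu> t"] hyperbolic_lift_close[of \<mu> t]
      pi_gt_zero by linarith
qed

lemma smooth_hyperbolic_lift:
  assumes "\<mu> > 0"
  shows "smooth_real (hyperbolic_lift \<mu>)"
proof -
  let ?D = "\<lambda>t. \<mu> * (cos t * cos t) + sin t * sin t"
  have "?D t \<noteq> 0" for t
    using hyperbolic_lift_denominator_pos[OF assms, of t] by (simp add: power2_eq_square)
  then have "deriv_differentiable_upto n
      (\<lambda>t. t + arctan ((1 - \<mu>) * sin t * cos t * inverse (?D t)))" for n
    using deriv_differentiable_upto_sin_cos[of n]
    by (intro deriv_differentiable_upto_add deriv_differentiable_upto_ident
        deriv_differentiable_upto_compose[OF _ deriv_differentiable_upto_arctan]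
        deriv_differentiable_upto_mult deriv_differentiable_upto_const deriv_differentiable_upto_inverse)
       auto
  moreover have "hyperbolic_lift \<mu> = (\<lambda>t. t + arctan ((1 - \<mu>) * sin t * cos t * inverse (?D t)))"
    by (simp add: fun_eq_iff hyperbolic_lift_def divide_inverse power2_eq_square)
  ultimately show ?thesis
    by (simp add: smooth_real_iff_upto)
qed

lemma hyperbolic_lift_in_SL2_tilde:
  assumes "\<mu> > 0"
  shows "hyperbolic_lift \<mu> \<in> SL2_tilde"
proof -
  have "diffeo_real (hyperbolic_lift \<mu>)"
    using assms hyperbolic_lift_inverse[of "1 / \<mu>"] hyperbolic_lift_inverse[of \<mu>]
    by (intro diffeo_realI[where g = "hyperbolic_lift (1 / \<mu>)"] smooth_hyperbolic_lift)
       (auto simp: fun_eq_iff)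
  then show ?thesis
    using assms hyperbolic_matrix_in_SL2 pibar_hyperbolic_lift
    by (auto simp: SL2_tilde_def fun_eq_iff)
qed

lemma hyperbolic_lift_hits:
  fixes t t' :: real
  assumes "cos t * cos t' > 0" and "sin t * sin t' > 0" and "\<bar>t - t'\<bar> < pi"
  obtains \<mu> where "\<mu> > 0" and "hyperbolic_lift \<mu> t = t'"
proof -
  define \<mu> where "\<mu> = sin t * cos t' / (cos t * sin t')"
  have nz: "cos t \<noteq> 0" "sin t' \<noteq> 0"
    using assms(1,2) by auto
  have "\<mu> = (sin t * sin t') * (cos t * cos t') / (cos t * sin t')\<^sup>2"
    using nz by (simp add: \<mu>_def field_simps power2_eq_square)
  then have "\<mu> > 0"
    using assms(1,2) nz by simp
  define r where "r = sin t / (sin t' * sqrt \<mu>)"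
  have "r > 0"
    using assms(2) \<open>\<mu> > 0\<close> by (auto simp: r_def zero_less_mult_iff zero_less_divide_iff mult_less_0_iff)
  have "\<mu> * cos t = sin t * cos t' / sin t'"
    using nz by (simp add: \<mu>_def)
  then have "hyperbolic_matrix \<mu> *v pibar t = r *\<^sub>R pibar t'"
    using nz \<open>\<mu> > 0\<close>
    by (simp add: vec2_eq_iff matrix_vector_mult_2 hyperbolic_matrix_def r_def field_simps)
       (metis mult.assoc real_sqrt_mult_self abs_of_pos)
  then have "pibar (hyperbolic_lift \<mu> t) = pibar t'"
    using \<open>\<mu> > 0\<close> \<open>r > 0\<close> by (simp add: pibar_hyperbolic_lift sl_act_pos_scale)
  moreover have "\<bar>hyperbolic_lift \<mu> t - t'\<bar> < 2 * pi"
    using hyperbolic_lift_close[of \<mu> t] assms(3) pi_gt_zero by linarith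
  ultimately show ?thesis
    using that \<open>\<mu> > 0\<close> pibar_eq_imp_eq by blast
qed

section \<open>Winding numbers\<close>

lemma winding_cong:
  assumes "\<And>k::nat. a + real k * pi < b \<longleftrightarrow> a' + real k * pi < b'"
    and "\<And>k::nat. b = a + real k * pi \<longleftrightarrow> b' = a' + real k * pi"
  shows "winding a b = winding a' b'"
proof -
  have "b < a + (real k + 1) * pi \<longleftrightarrow> b' < a' + (real k + 1) * pi" for k
    using assms(1)[of "Suc k"] assms(2)[of "Suc k"] by (auto simp: distrib_right)
  then show ?thesis
    unfolding winding_def using assms by simp
qed

lemma winding_of_int:
  assumes "b = a + real k * pi"
  shows "winding a b = real k"
  unfolding winding_def
proof (rule the_equality)
  fix w
  assume "(\<exists>k'::nat. b = a + real k' * pi \<and> w = real k') \<or>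
      (\<exists>k'::nat. a + real k' * pi < b \<and> b < a + (real k' + 1) * pi \<and> w = real k' + 1/2)"
  then show "w = real k"
  proof (elim disjE exE conjE)
    fix k' :: nat
    assume "b = a + real k' * pi" "w = real k'"
    then show "w = real k"
      using assms by simp
  next
    fix k' :: nat
    assume "a + real k' * pi < b" "b < a + (real k' + 1) * pi"
    then have "real k' * pi < real k * pi" "real k * pi < real (Suc k') * pi"
      using assms by (simp_all add: distrib_right)
    then have "k' < k" "k < Suc k'"
      by (simp_all only: mult_less_cancel_right_pos[OF pi_gt_zero] of_nat_less_iff)
    then show "w = real k"
      by simp
  qed
qed (use assms in auto)

lemma winding_of_half:
  assumes "a + real k * pi < b" and "b < a + (real k + 1) * pi"
  shows "winding a b = real k + 1/2"
  unfolding winding_def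
proof (rule the_equality)
  fix w
  assume "(\<exists>k'::nat. b = a + real k' * pi \<and> w = real k') \<or>
      (\<exists>k'::nat. a + real k' * pi < b \<and> b < a + (real k' + 1) * pi \<and> w = real k' + 1/2)"
  then show "w = real k + 1/2"
  proof (elim disjE exE conjE)
    fix k' :: nat
    assume "b = a + real k' * pi"
    then have "real k * pi < real k' * pi" "real k' * pi < real (Suc k) * pi"
      using assms by (simp_all add: distrib_right)
    then have "k < k'" "k' < Suc k"
      by (simp_all only: mult_less_cancel_right_pos[OF pi_gt_zero] of_nat_less_iff)
    then show "w = real k + 1/2"
      by simp
  next
    fix k' :: nat
    assume "a + real k' * pi < b" "b < a + (real k' + 1) * pi" "w = real k' + 1/2"
    then have "real k' * pi < real (Suc k) * pi" "real k * pi < real (Suc k') * pi"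
      using assms by (simp_all add: distrib_right)
    then have "k' < Suc k" "k < Suc k'"
      by (simp_all only: mult_less_cancel_right_pos[OF pi_gt_zero] of_nat_less_iff)
    then show "w = real k + 1/2"
      using \<open>w = real k' + 1/2\<close> by simp
  qed
qed (use assms in auto)

lemma winding_cases:
  assumes "a < b"
  obtains (int) k :: nat where "b = a + real k * pi"
    | (half) k :: nat where "a + real k * pi < b" "b < a + (real k + 1) * pi"
proof -
  define x where "x = (b - a) / pi"
  define k where "k = nat \<lfloor>x\<rfloor>"
  have "x > 0"
    using assms by (simp add: x_def)
  then have "real k \<le> x" "x < real k + 1"
    by (simp_all add: k_def)
  moreover have "b = a + x * pi"
    by (simp add: x_def)
  ultimately show ?thesis
    using that mult_strict_right_mono[OF _ pi_gt_zero]
    by (cases "x = real k") (auto simp: order.order_iff_strict)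
qed

lemma winding_eq_cases:
  assumes "a < b" and "a' < b'" and "winding a b = winding a' b'"
  obtains (int) k :: nat where "b = a + real k * pi" and "b' = a' + real k * pi"
    | (half) k :: nat where "a + real k * pi < b" "b < a + (real k + 1) * pi"
        and "a' + real k * pi < b'" "b' < a' + (real k + 1) * pi"
proof -
  have int_ne_half: "real k \<noteq> real k' + 1/2" for k k' :: nat
  proof
    assume "real k = real k' + 1/2"
    then have "2 * k = 2 * k' + 1"
      by linarith
    then show False
      by presburger
  qed
  from assms(1) show ?thesis
  proof (cases rule: winding_cases)
    case (int k)
    from assms(2) show ?thesis
    proof (cases rule: winding_cases)
      case (int k')
      with assms(3) \<open>b = a + real k * pi\<close> show ?thesis
        using that(1) by (simp add: winding_of_int)
    next
      case (half k')
      with assms(3) \<open>b = a + real k * pi\<close> show ?thesis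
        using int_ne_half by (simp add: winding_of_int winding_of_half)
    qed
  next
    case (half k)
    from assms(2) show ?thesis
    proof (cases rule: winding_cases)
      case (int k')
      with assms(3) half show ?thesis
        using int_ne_half by (metis winding_of_int winding_of_half)
    next
      case (half k')
      with assms(3) \<open>a + real k * pi < b\<close> \<open>b < a + (real k + 1) * pi\<close> show ?thesis
        using that(2) by (simp add: winding_of_half)
    qed
  qed
qed

section \<open>Invariance and transitivity\<close>

lemma winding_uminus: "winding (- b) (- a) = winding a b"
  by (rule winding_cong) auto

lemma winding_strict_mono_image:
  assumes "strict_mono G" and "\<And>t. G (t + pi) = G t + pi"
  shows "winding (G a) (G b) = winding a b"
proof -
  have shift: "G (t + real k * pi) = G t + real k * pi" for t k
  proof (induction k)
    case (Suc k)
    have "G (t + real (Suc k) * pi) = G ((t + real k * pi) + pi)"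
      by (simp add: algebra_simps)
    also have "\<dots> = G t + real k * pi + pi"
      by (simp only: assms(2) Suc.IH)
    finally show ?case
      by (simp add: algebra_simps)
  qed simp
  show ?thesis
    using strict_mono_less[OF assms(1)] strict_mono_eq[OF assms(1)]
    by (intro winding_cong) (simp_all flip: shift)
qed

lemma SL2_tilde_pibar_eqD:
  assumes "F \<in> SL2_tilde" and "pibar (F s) = pibar (F t)"
  shows "pibar s = pibar t"
proof -
  obtain A where "A \<in> SL2" and "\<And>t. pibar (F t) = sl_act A (pibar t)"
    using assms(1) by (auto simp: SL2_tilde_def fun_eq_iff)
  with assms(2) show ?thesis
    using sl_act_inj by auto
qed

lemma SL2_tilde_add_pi_mod_2pi:
  assumes "F \<in> SL2_tilde"
  obtains n :: int where "F (t + pi) = F t + pi + 2 * pi * n"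
proof -
  obtain A where "A \<in> SL2" and lift: "\<And>t. pibar (F t) = sl_act A (pibar t)"
    using assms by (auto simp: SL2_tilde_def fun_eq_iff)
  then have "pibar (F (t + pi)) = pibar (F t + pi)"
    by (simp add: pibar_add_pi sl_act_uminus)
  then show ?thesis
    using that pibar_eq_iff by (metis add.commute)
qed

lemma SL2_tilde_dist_less_2pi:
  assumes F: "F \<in> SL2_tilde" and "t \<le> s" and "s < t + 2 * pi"
  shows "\<bar>F s - F t\<bar> < 2 * pi"
proof (rule ccontr)
  assume "\<not> \<bar>F s - F t\<bar> < 2 * pi"
  moreover have "continuous_on {t..s} F"
    using F by (rule SL2_tilde_continuous)
  ultimately obtain u where u: "t \<le> u" "u \<le> s" and "F u = F t + 2 * pi \<or> F u = F t - 2 * pi"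
    using IVT'[of F t "F t + 2 * pi" s] IVT2'[of F s "F t - 2 * pi" t] \<open>t \<le> s\<close>
    by (cases "F t \<le> F s") force+
  moreover have "pibar (x + 2 * pi) = pibar x" for x
    by (simp add: vec2_eq_iff)
  ultimately have "F u \<noteq> F t" and "pibar (F u) = pibar (F t)"
    using pi_gt_zero by (auto simp del: pibar_nth) (metis diff_add_cancel)
  moreover have "pibar u = pibar t"
    using SL2_tilde_pibar_eqD[OF F \<open>pibar (F u) = pibar (F t)\<close>] .
  then have "u = t"
    using u assms(3) pi_gt_zero by (intro pibar_eq_imp_eq) auto
  ultimately show False
    by simp
qed

lemma SL2_tilde_add_pi:
  assumes "F \<in> SL2_tilde"
  shows "F (t + pi) = F t + pi \<or> F (t + pi) = F t - pi"
proof -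
  obtain n :: int where n: "F (t + pi) = F t + pi + 2 * pi * n"
    using SL2_tilde_add_pi_mod_2pi[OF assms] .
  have "\<bar>F (t + pi) - F t\<bar> < 2 * pi"
    using SL2_tilde_dist_less_2pi[OF assms, of t "t + pi"] pi_gt_zero by simp
  moreover have "F (t + pi) - F t = pi * (1 + 2 * real_of_int n)"
    using n by (simp add: algebra_simps)
  ultimately have "\<bar>1 + 2 * real_of_int n\<bar> < 2"
    by (simp add: abs_mult)
  then have "n = 0 \<or> n = -1"
    by linarith
  with n show ?thesis
    by auto
qed

lemma SL2_tilde_cases:
  assumes "F \<in> SL2_tilde"
  obtains (increasing) "strict_mono F" and "\<And>t. F (t + pi) = F t + pi"
    | (decreasing) "strict_mono (\<lambda>t. - F t)" and "\<And>t. F (t + pi) = F t - pi"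
proof -
  have "strict_mono_on UNIV F \<or> strict_antimono_on UNIV F"
    using injective_eq_monotone_map[of UNIV F] SL2_tilde_continuous[OF assms] SL2_tilde_inj[OF assms]
    by simp
  then show ?thesis
  proof
    assume "strict_mono F"
    then have "F (t + pi) = F t + pi" for t
      using SL2_tilde_add_pi[OF assms, of t] strict_monoD[of F t "t + pi"] pi_gt_zero by auto
    with \<open>strict_mono F\<close> show ?thesis
      by (rule increasing)
  next
    assume "strict_antimono_on UNIV F"
    then have "strict_mono (\<lambda>t. - F t)"
      by (simp add: monotone_on_def)
    moreover have "F (t + pi) = F t - pi" for t
      using SL2_tilde_add_pi[OF assms, of t] strict_monoD[OF \<open>strict_mono (\<lambda>t. - F t)\<close>, of t "t + pi"]
        pi_gt_zero by auto
    ultimately show ?thesis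
      by (rule decreasing)
  qed
qed

lemma SL2_tilde_image_ivl:
  assumes "F \<in> SL2_tilde" and "a < b"
  shows "F ` {a<..<b} = (if F a \<le> F b then {F a<..<F b} else {F b<..<F a})"
proof -
  have "F ` open_segment a b = open_segment (F a) (F b)"
    using SL2_tilde_continuous[OF assms(1)] SL2_tilde_inj[OF assms(1)]
    by (intro continuous_injective_image_open_segment_1) (auto intro: inj_on_subset)
  then show ?thesis
    using assms(2) by (simp add: open_segment_eq_real_ivl)
qed

lemma SL2_tilde_preserves_winding:
  assumes F: "F \<in> SL2_tilde" and "a < b" and "a' < b'" and img: "F ` {a<..<b} = {a'<..<b'}"
  shows "winding a b = winding a' b'"
  using F
proof (cases rule: SL2_tilde_cases)
  case increasing
  then have "a' = F a" and "b' = F b"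
    using SL2_tilde_image_ivl[OF F \<open>a < b\<close>] img \<open>a' < b'\<close> strict_monoD[of F a b] \<open>a < b\<close>
    by (auto simp: greaterThanLessThan_eq_iff)
  with increasing show ?thesis
    using winding_strict_mono_image[of F] by simp
next
  case decreasing
  then have "a' = F b" and "b' = F a"
    using SL2_tilde_image_ivl[OF F \<open>a < b\<close>] img \<open>a' < b'\<close> strict_monoD[of "\<lambda>t. - F t" a b] \<open>a < b\<close>
    by (auto simp: greaterThanLessThan_eq_iff)
  then have "winding a' b' = winding (- F a) (- F b)"
    using winding_uminus[where a = a' and b = b'] by simp
  also have "\<dots> = winding a b"
    using decreasing by (intro winding_strict_mono_image[of "\<lambda>t. - F t"]) auto
  finally show ?thesis ..
qed

lemma half_angles_same_quadrant:
  fixes L L' :: real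
  assumes "real k * pi < L" "L < (real k + 1) * pi" "real k * pi < L'" "L' < (real k + 1) * pi"
  shows "cos (L / 2) * cos (L' / 2) > 0" and "sin (L / 2) * sin (L' / 2) > 0"
proof -
  obtain j where j: "k = 2 * j \<or> k = 2 * j + 1"
    by (metis oddE evenE)
  define z z' where "z = L / 2 - real j * pi" and "z' = L' / 2 - real j * pi"
  have L: "L / 2 = z + real j * pi" "L' / 2 = z' + real j * pi"
    by (simp_all add: z_def z'_def)
  have cs: "cos (x + real j * pi) = (-1) ^ j * cos x" "sin (x + real j * pi) = (-1) ^ j * sin x" for x
    by (simp_all add: cos_add sin_add)
  have "((-1::real) ^ j) * (-1) ^ j = 1"
    by (simp flip: power_add)
  then have shift: "cos (L / 2) * cos (L' / 2) = cos z * cos z'"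
      "sin (L / 2) * sin (L' / 2) = sin z * sin z'"
    unfolding L cs by (metis mult.assoc mult.left_commute mult_1)+
  from j have "cos z * cos z' > 0 \<and> sin z * sin z' > 0"
  proof
    assume "k = 2 * j"
    then have "0 < z" "z < pi / 2" "0 < z'" "z' < pi / 2"
      using assms by (simp_all add: z_def z'_def algebra_simps)
    then show ?thesis
      using cos_gt_zero sin_gt_zero2 by simp
  next
    assume "k = 2 * j + 1"
    then have "pi / 2 < z" "z < pi" "pi / 2 < z'" "z' < pi"
      using assms by (simp_all add: z_def z'_def algebra_simps)
    moreover have "cos x < 0" if "pi / 2 < x" "x < pi" for x
      using cos_gt_zero_pi[of "x - pi"] that by simp
    ultimately show ?thesis
      using sin_gt_zero by (simp add: mult_neg_neg)
  qed
  with shift show "cos (L / 2) * cos (L' / 2) > 0" and "sin (L / 2) * sin (L' / 2) > 0"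
    by simp_all
qed

lemma image_add_greaterThanLessThan_real: "(\<lambda>s. s + c) ` {x<..<y} = {x + c<..<y + (c::real)}"
  by (auto intro!: image_eqI[where x = "z - c" for z])

lemma SL2_tilde_maps_ivl_of_half:
  assumes "a + real k * pi < b" "b < a + (real k + 1) * pi"
    and "a' + real k * pi < b'" "b' < a' + (real k + 1) * pi"
  shows "\<exists>F\<in>SL2_tilde. F ` {a<..<b} = {a'<..<b'}"
proof -
  define t t' where "t = (b - a) / 2" and "t' = (b' - a') / 2"
  have "2 * t = b - a" "2 * t' = b' - a'" "real k * pi \<ge> 0"
    by (simp_all add: t_def t'_def)
  then have "0 < t" "0 < t'" and "\<bar>t - t'\<bar> < pi"
    using assms[unfolded distrib_right mult_1] pi_gt_zero by linarith+
  moreover have "cos t * cos t' > 0" "sin t * sin t' > 0"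
    using half_angles_same_quadrant[of k "b - a" "b' - a'"] assms by (simp_all add: t_def t'_def)
  ultimately obtain \<mu> where "\<mu> > 0" and hit: "hyperbolic_lift \<mu> t = t'"
    using hyperbolic_lift_hits by blast
  define F where "F = (\<lambda>s. s + (a' + b') / 2) \<circ> hyperbolic_lift \<mu> \<circ> (\<lambda>s. s + - (a + b) / 2)"
  have "F \<in> SL2_tilde"
    unfolding F_def using \<open>\<mu> > 0\<close>
    by (intro SL2_tilde_comp translation_in_SL2_tilde hyperbolic_lift_in_SL2_tilde)
  have "hyperbolic_lift \<mu> ` {- t<..<t} = {- t'<..<t'}"
    using SL2_tilde_image_ivl[OF hyperbolic_lift_in_SL2_tilde[OF \<open>\<mu> > 0\<close>], of "- t" t]
      hit hyperbolic_lift_minus[of \<mu> t] \<open>0 < t\<close> \<open>0 < t'\<close> by simp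
  moreover have "a + - (a + b) / 2 = - t" "b + - (a + b) / 2 = t"
      "- t' + (a' + b') / 2 = a'" "t' + (a' + b') / 2 = b'"
    by (simp_all add: t_def t'_def field_simps)
  ultimately have "(\<lambda>s. s + (a' + b') / 2) ` hyperbolic_lift \<mu> ` (\<lambda>s. s + - (a + b) / 2) ` {a<..<b}
      = {a'<..<b'}"
    by (simp only: image_add_greaterThanLessThan_real)
  then have "F ` {a<..<b} = {a'<..<b'}"
    by (simp add: F_def image_comp)
  with \<open>F \<in> SL2_tilde\<close> show ?thesis
    by blast
qed

theorem mainTheorem6:
  fixes a b a' b' :: real
  assumes "a < b" and "a' < b'"
  shows "(\<exists>F\<in>SL2_tilde. F ` {a<..<b} = {a'<..<b'}) \<longleftrightarrow> winding a b = winding a' b'"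
proof
  assume "\<exists>F\<in>SL2_tilde. F ` {a<..<b} = {a'<..<b'}"
  then show "winding a b = winding a' b'"
    using SL2_tilde_preserves_winding assms by blast
next
  assume "winding a b = winding a' b'"
  with assms show "\<exists>F\<in>SL2_tilde. F ` {a<..<b} = {a'<..<b'}"
  proof (cases rule: winding_eq_cases)
    case (int k)
    then have "(\<lambda>s. s + (a' - a)) ` {a<..<b} = {a'<..<b'}"
      by (simp add: image_add_greaterThanLessThan_real add.commute)
    then show ?thesis
      using translation_in_SL2_tilde by blast
  next
    case (half k)
    then show ?thesis
      by (rule SL2_tilde_maps_ivl_of_half)
  qed
qed

end
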